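(* Let $S$ be a finite non-empty set and $\Sigma\subseteq\mathbb{R}_+\times S$ locally finite, and let $(X_n,\eta_n)$ be a time-homogeneous irreducible Markov chain on $\Sigma$ such that every line $\Lambda_k=\{x:(x,k)\in\Sigma\}$ is unbounded. Suppose that for some $p>2$ there is $C_p<\infty$ with $\mathbb{E}_{x,i}[|X_{n+1}-X_n|^p]\le C_p$ for all $(x,i)\in\Sigma$. Suppose $q_{ij}(x)\to q_{ij}$ as $x\to\infty$ with $(q_{ij})$ an irreducible stochastic matrix, and suppose there exist $c_i\in\mathbb{R}$, $s_i^2\ge0$ (at least one $s_i^2\ne0$) with $\mu_i(x)=c_i/x+o(x^{-1})$ and $\sigma_i^2(x)=s_i^2+o(1)$ as $x\to\infty$. Let $b_i\in\mathbb{R}$, $i\in S$, be arbitrary and let $f_\nu$ be as defined in the context. Then for any $\nu\in(2-p,p]$, as $x\to\infty$, \[\mathbb{E}_{x,i}[f_\nu(X_{n+1},\eta_{n+1})-f_\nu(X_n,\eta_n)]=\frac\nu2x^{\nu-2}\Big(2c_i+(\nu-1)s_i^2+\sum_{j\in S}(b_j-b_i)q_{ij}+o(1)\Big).\]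
   Context: Locally finite means $\Sigma\cap([0,r]\times S)$ is finite for every $r\ge0$. $\mathbb{E}_{x,i}[\cdot]=\mathbb{E}[\cdot\mid X_n=x,\eta_n=i]$; $q_{ij}(x)=\Pr[\eta_{n+1}=j\mid X_n=x,\eta_n=i]$; $\mu_i(x)=\mathbb{E}_{x,i}[X_{n+1}-X_n]$; $\sigma_i^2(x)=\mathbb{E}_{x,i}[(X_{n+1}-X_n)^2]$. Given $\nu\in\mathbb{R}$ and $(b_i)_{i\in S}$, $x_0:=1+\sqrt{|\nu|\max_i|b_i|}$ and $f_\nu(x,i)=x^\nu+\frac\nu2b_ix^{\nu-2}$ for $x\ge x_0$, $f_\nu(x,i)=x_0^\nu+\frac\nu2b_ix_0^{\nu-2}$ for $x<x_0$. *)

theory Defs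
  imports "HOL-Probability.Probability"
begin

definition x0_const :: "'i set \<Rightarrow> ('i \<Rightarrow> real) \<Rightarrow> real \<Rightarrow> real" where
  "x0_const S b \<nu> = 1 + sqrt (\<bar>\<nu>\<bar> * Max ((\<lambda>i. \<bar>b i\<bar>) ` S))"

definition f_nu :: "'i set \<Rightarrow> ('i \<Rightarrow> real) \<Rightarrow> real \<Rightarrow> real \<times> 'i \<Rightarrow> real" where
  "f_nu S b \<nu> z = (let x = fst z; i = snd z; x0 = x0_const S b \<nu> in
     if x \<ge> x0 then x powr \<nu> + \<nu> / 2 * b i * x powr (\<nu> - 2)
     else x0 powr \<nu> + \<nu> / 2 * b i * x0 powr (\<nu> - 2))"

definition step_rel :: "(real \<times> 'i) set \<Rightarrow> (real \<times> 'i \<Rightarrow> (real \<times> 'i) pmf) \<Rightarrow> ((real \<times> 'i) \<times> (real \<times> 'i)) set" where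
  "step_rel \<Sigma> P = {(z, w). z \<in> \<Sigma> \<and> w \<in> set_pmf (P z)}"

definition line :: "(real \<times> 'i) set \<Rightarrow> 'i \<Rightarrow> real set" where
  "line \<Sigma> k = {x. (x, k) \<in> \<Sigma>}"

definition along_line :: "(real \<times> 'i) set \<Rightarrow> 'i \<Rightarrow> real filter" where
  "along_line \<Sigma> k = inf at_top (principal (line \<Sigma> k))"

end

theory Submission
  imports Defs
begin

text \<open>
  For \<open>x \<ge> 2 x\<^sub>0\<close> write \<open>f\<^sub>\<nu>(y, j) = H(y) + \<nu>/2 b\<^sub>j K(y)\<close> with \<open>H(y) = max(y, x\<^sub>0)^\<nu>\<close> and
  \<open>K(y) = max(y, x\<^sub>0)^(\<nu> - 2)\<close>, and expand \<open>H\<close> to second and \<open>K\<close> to zeroth order around \<open>x\<close>.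
  For \<open>|y - x| \<le> x/2\<close> the Taylor remainders are \<open>O(x^(\<nu> - 3) |y - x|^3)\<close> and
  \<open>O(x^(\<nu> - 3) |y - x|)\<close>, while for larger jumps every term is dominated by \<open>|y - x|^p\<close>.
  Since \<open>2 - p < \<nu> \<le> p\<close>, both errors are at most \<open>x^(\<nu> - 2 - \<epsilon>) (1 + |y - x|^p)\<close> for some
  \<open>\<epsilon> > 0\<close>, so the uniform \<open>p\<close>-th moment bound makes the error in the expected increment
  \<open>O(x^(\<nu> - 2 - \<epsilon>))\<close>. The main terms are
  \<open>\<nu>/2 x^(\<nu> - 2) (2 x \<mu>\<^sub>i(x) + (\<nu> - 1) \<sigma>\<^sub>i\<^sup>2(x) + \<Sum>\<^sub>j (b\<^sub>j - b\<^sub>i) q\<^sub>i\<^sub>j(x))\<close>, whose bracket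
  converges to the one in the theorem by the assumed asymptotics of \<open>\<mu>\<^sub>i\<close>, \<open>\<sigma>\<^sub>i\<^sup>2\<close> and \<open>q\<^sub>i\<^sub>j\<close>.
\<close>

lemma one_plus_powr_le_two_powr_abs:
  fixes e t :: real
  assumes "\<bar>t\<bar> \<le> 1/2"
  shows "(1 + t) powr e \<le> 2 powr \<bar>e\<bar>"
proof (cases "e \<ge> 0")
  case True
  have "(1 + t) powr e \<le> 2 powr e" using assms True by (intro powr_mono2) auto
  then show ?thesis using True by simp
next
  case False
  have "(1/2) powr (-e) \<le> (1 + t) powr (-e)" using assms False by (intro powr_mono2) auto
  then have "inverse ((1 + t) powr (-e)) \<le> inverse ((1/2) powr (-e))"
    using False by (intro le_imp_inverse_le) auto
  then show ?thesis using assms False by (simp add: powr_minus powr_divide)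
qed

lemma one_plus_powr_taylor_bound:
  fixes a :: real and n :: nat
  obtains C where "C \<ge> 0" and "\<And>t. \<bar>t\<bar> \<le> 1/2 \<Longrightarrow>
     \<bar>(1 + t) powr a - (\<Sum>m<n. (\<Prod>k<m. a - real k) / fact m * t ^ m)\<bar> \<le> C * \<bar>t\<bar> ^ n"
proof
  define d where "d m t = (\<Prod>k<m. a - real k) * (1 + t) powr (a - real m)" for m t
  show "\<bar>\<Prod>k<n. a - real k\<bar> / fact n * 2 powr \<bar>a - real n\<bar> \<ge> 0" by simp
  fix x :: real
  assume x: "\<bar>x\<bar> \<le> 1/2"
  have d0: "d 0 = (\<lambda>t. (1 + t) powr a)" by (rule ext) (simp add: d_def)
  have D: "\<forall>m t. m < n \<and> \<bar>t\<bar> \<le> \<bar>x\<bar> \<longrightarrow> DERIV (d m) t :> d (Suc m) t"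
  proof (intro allI impI)
    fix m t
    assume "m < n \<and> \<bar>t\<bar> \<le> \<bar>x\<bar>"
    then have "1 + t > 0" using x by auto
    then have "DERIV (\<lambda>t. (1 + t) powr (a - real m)) t :> (a - real m) * (1 + t) powr (a - real m - 1)"
      by (auto intro!: derivative_eq_intros)
    from DERIV_cmult[OF this, of "\<Prod>k<m. a - real k"] show "DERIV (d m) t :> d (Suc m) t"
      unfolding d_def by (simp add: algebra_simps)
  qed
  then obtain t where t: "\<bar>t\<bar> \<le> \<bar>x\<bar>"
    and eq: "(1 + x) powr a = (\<Sum>m<n. d m 0 / fact m * x ^ m) + d n t / fact n * x ^ n"
    using Maclaurin_bi_le[OF d0 D] by blast
  have "\<bar>d n t / fact n * x ^ n\<bar>
      = \<bar>\<Prod>k<n. a - real k\<bar> / fact n * (1 + t) powr (a - real n) * \<bar>x\<bar> ^ n"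
    using t x by (simp add: d_def abs_mult power_abs)
  also have "\<dots> \<le> \<bar>\<Prod>k<n. a - real k\<bar> / fact n * 2 powr \<bar>a - real n\<bar> * \<bar>x\<bar> ^ n"
    using one_plus_powr_le_two_powr_abs[of t "a - real n"] t x
    by (intro mult_right_mono mult_left_mono) auto
  finally show "\<bar>(1 + x) powr a - (\<Sum>m<n. (\<Prod>k<m. a - real k) / fact m * x ^ m)\<bar>
      \<le> \<bar>\<Prod>k<n. a - real k\<bar> / fact n * 2 powr \<bar>a - real n\<bar> * \<bar>x\<bar> ^ n"
    using eq by (simp add: d_def)
qed

lemma powr_taylor_bound:
  fixes a :: real and n :: nat
  obtains C where "C \<ge> 0" and "\<And>x y. x > 0 \<Longrightarrow> \<bar>y - x\<bar> \<le> x/2 \<Longrightarrow>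
     \<bar>y powr a - (\<Sum>m<n. (\<Prod>k<m. a - real k) / fact m * x powr (a - real m) * (y - x) ^ m)\<bar>
       \<le> C * x powr (a - real n) * \<bar>y - x\<bar> ^ n"
proof -
  obtain C where "C \<ge> 0" and C: "\<And>t. \<bar>t\<bar> \<le> 1/2 \<Longrightarrow>
     \<bar>(1 + t) powr a - (\<Sum>m<n. (\<Prod>k<m. a - real k) / fact m * t ^ m)\<bar> \<le> C * \<bar>t\<bar> ^ n"
    using one_plus_powr_taylor_bound by blast
  moreover have "\<bar>y powr a - (\<Sum>m<n. (\<Prod>k<m. a - real k) / fact m * x powr (a - real m) * (y - x) ^ m)\<bar>
       \<le> C * x powr (a - real n) * \<bar>y - x\<bar> ^ n" if x: "x > 0" and y: "\<bar>y - x\<bar> \<le> x/2" for x y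
  proof -
    define t where "t = (y - x) / x"
    have t: "\<bar>t\<bar> \<le> 1/2" using x y by (simp add: t_def abs_divide field_simps)
    have scale: "x powr (a - real m) * z ^ m = x powr a * (z / x) ^ m" for m z
      using x by (simp add: powr_diff powr_realpow power_divide)
    have "y = x * (1 + t)" using x by (simp add: t_def field_simps)
    then have "y powr a = x powr a * (1 + t) powr a" by (simp add: powr_mult)
    moreover have "(\<Sum>m<n. (\<Prod>k<m. a - real k) / fact m * x powr (a - real m) * (y - x) ^ m)
        = x powr a * (\<Sum>m<n. (\<Prod>k<m. a - real k) / fact m * t ^ m)"
      unfolding sum_distrib_left
      by (intro sum.cong refl) (use scale in \<open>simp add: t_def ac_simps\<close>)
    ultimately have "y powr a - (\<Sum>m<n. (\<Prod>k<m. a - real k) / fact m * x powr (a - real m) * (y - x) ^ m)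
        = x powr a * ((1 + t) powr a - (\<Sum>m<n. (\<Prod>k<m. a - real k) / fact m * t ^ m))"
      (is "?L = _") by (simp add: right_diff_distrib)
    then have "\<bar>?L\<bar> \<le> x powr a * (C * \<bar>t\<bar> ^ n)"
      using C[OF t] by (simp add: abs_mult mult_left_mono)
    also have "\<dots> = C * x powr (a - real n) * \<bar>y - x\<bar> ^ n"
      using scale[of n "\<bar>y - x\<bar>"] x by (simp add: t_def)
    finally show ?thesis .
  qed
  ultimately show thesis using that by blast
qed

lemma powr_tail_term_le:
  fixes x q a b k p :: real
  assumes x: "x \<ge> 1" and q: "q > x/2" and k: "0 \<le> k" "k \<le> p" and b: "a - p \<le> b"
  shows "x powr (a - k) * q powr k \<le> 2 powr p * q powr p * x powr b"
proof -
  have "x powr (a - k) * q powr k = x powr (a - k) * q powr p * q powr (k - p)"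
    by (simp add: powr_add[symmetric])
  also have "\<dots> \<le> x powr (a - k) * q powr p * (x/2) powr (k - p)"
    using x q k by (intro mult_left_mono powr_mono2') auto
  also have "\<dots> = 2 powr (p - k) * q powr p * x powr (a - p)"
    using x by (simp add: powr_divide powr_diff powr_add field_simps)
  also have "\<dots> \<le> 2 powr p * q powr p * x powr b"
  proof -
    have "2 powr (p - k) \<le> 2 powr p" "x powr (a - p) \<le> x powr b"
      using x k b by (auto intro: powr_mono)
    then show ?thesis by (intro mult_mono mult_right_mono) auto
  qed
  finally show ?thesis .
qed

lemma max_powr_le_tail:
  fixes X0 x y e p b :: real
  assumes X0: "X0 \<ge> 1" and x: "x \<ge> 2 * X0" and q: "\<bar>y - x\<bar> > x/2"
    and e: "e \<le> p" and p: "p > 0" and b: "max e 0 - p \<le> b"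
  shows "(max y X0) powr e \<le> 8 powr p * \<bar>y - x\<bar> powr p * x powr b"
proof (cases "e \<ge> 0")
  case True
  have tail: "\<bar>y - x\<bar> powr e \<le> 2 powr p * \<bar>y - x\<bar> powr p * x powr b"
    using powr_tail_term_le[of x "\<bar>y - x\<bar>" e p e b] X0 x q True e b by simp
  have "max y X0 \<le> 4 * \<bar>y - x\<bar>" using X0 x q by (auto simp: max_def abs_real_def)
  then have "(max y X0) powr e \<le> 4 powr e * \<bar>y - x\<bar> powr e"
    using True X0 by (auto simp: powr_mult[symmetric] intro: powr_mono2)
  also have "\<dots> \<le> 4 powr p * (2 powr p * \<bar>y - x\<bar> powr p * x powr b)"
    using tail e by (intro mult_mono) auto
  also have "\<dots> = 8 powr p * \<bar>y - x\<bar> powr p * x powr b"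
    by (simp add: powr_mult[symmetric])
  finally show ?thesis .
next
  case False
  have "(max y X0) powr e \<le> 1" using powr_mono[of e 0 "max y X0"] False X0 by auto
  also have "\<dots> \<le> 2 powr p * \<bar>y - x\<bar> powr p * x powr b"
    using powr_tail_term_le[of x "\<bar>y - x\<bar>" 0 p 0 b] X0 x q p b False by (cases "y = x") auto
  also have "\<dots> \<le> 8 powr p * \<bar>y - x\<bar> powr p * x powr b"
    using p by (intro mult_right_mono powr_mono2) auto
  finally show ?thesis .
qed

lemma le_one_plus_abs_powr:
  fixes t p :: real
  assumes "p \<ge> 2"
  shows "\<bar>t\<bar> \<le> 1 + \<bar>t\<bar> powr p" and "t\<^sup>2 \<le> 1 + \<bar>t\<bar> powr p"
proof -
  have "\<bar>t\<bar> powr e \<le> 1 + \<bar>t\<bar> powr p" if "0 < e" "e \<le> p" for e :: real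
  proof (cases "\<bar>t\<bar> \<le> 1")
    case True
    then have "\<bar>t\<bar> powr e \<le> 1" using that by (simp add: powr_le1)
    then show ?thesis by (smt (verit) powr_ge_zero)
  next
    case False
    then have "\<bar>t\<bar> powr e \<le> \<bar>t\<bar> powr p" using that by (intro powr_mono) auto
    then show ?thesis by simp
  qed
  from this[of 1] this[of 2] assms show "\<bar>t\<bar> \<le> 1 + \<bar>t\<bar> powr p" "t\<^sup>2 \<le> 1 + \<bar>t\<bar> powr p"
    by (simp_all add: powr_power)
qed

text \<open>Split at \<open>q = sqrt x\<close>: below, one factor \<open>q\<close> is traded for \<open>sqrt x\<close>; above,
  \<open>q^2 \<le> q^p x^(1 - p/2)\<close>.\<close>

lemma cube_le_moment_weight:
  fixes x q p \<nu> \<epsilon> :: real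
  assumes x: "x \<ge> 1" and q: "0 \<le> q" "q \<le> x/2" and p: "p > 2"
    and eps: "\<epsilon> \<le> 1/2" "\<epsilon> \<le> (p - 2)/2"
  shows "x powr (\<nu> - 3) * q ^ 3 \<le> x powr (\<nu> - 2 - \<epsilon>) * (1 + q powr p)"
proof (cases "q \<le> sqrt x")
  case True
  have "q ^ 3 \<le> sqrt x * q\<^sup>2"
    using mult_right_mono[OF True, of "q\<^sup>2"] by (simp add: power3_eq_cube power2_eq_square)
  then have "x powr (\<nu> - 3) * q ^ 3 \<le> x powr (\<nu> - 3) * sqrt x * q\<^sup>2"
    by (simp add: mult.assoc mult_left_mono)
  also have "\<dots> = x powr (\<nu> - 5/2) * q\<^sup>2"
    using x by (simp add: powr_half_sqrt[symmetric] powr_add[symmetric])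
  also have "\<dots> \<le> x powr (\<nu> - 2 - \<epsilon>) * (1 + q powr p)"
    using le_one_plus_abs_powr(2)[of p q] q x p eps by (intro mult_mono powr_mono) auto
  finally show ?thesis .
next
  case False
  then have "q > 0" using real_sqrt_ge_zero[of x] x by linarith
  have "q\<^sup>2 = q powr p * q powr (2 - p)" using \<open>q > 0\<close> by (simp add: powr_add[symmetric])
  also have "\<dots> \<le> q powr p * (sqrt x) powr (2 - p)"
    using False p x by (intro mult_left_mono powr_mono2') auto
  finally have "q\<^sup>2 \<le> q powr p * x powr (1 - p/2)"
    using x by (simp add: powr_half_sqrt[symmetric] powr_powr diff_divide_distrib)
  then have "q * q\<^sup>2 \<le> x * (q powr p * x powr (1 - p/2))"
    using q by (intro mult_mono) auto
  then have "x powr (\<nu> - 3) * q ^ 3 \<le> x powr (\<nu> - 3) * x * (q powr p * x powr (1 - p/2))"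
    by (simp add: power3_eq_cube power2_eq_square mult.assoc mult_left_mono)
  also have "\<dots> = x powr (\<nu> - 1 - p/2) * q powr p"
  proof -
    have "x powr (\<nu> - 1 - p/2) = x powr (\<nu> - 3) * x powr 1 * x powr (1 - p/2)"
      by (simp only: powr_add[symmetric]) (simp add: algebra_simps)
    then show ?thesis using x by (simp add: ac_simps)
  qed
  also have "\<dots> \<le> x powr (\<nu> - 2 - \<epsilon>) * (1 + q powr p)"
    using x eps by (intro mult_mono powr_mono) auto
  finally show ?thesis .
qed

lemma max_powr_taylor2_bound:
  fixes X0 p \<nu> \<epsilon> :: real
  assumes X0: "X0 \<ge> 1" and p: "p > 2" and nu: "\<nu> \<le> p"
    and eps: "\<epsilon> \<le> 1/2" "\<epsilon> \<le> (p - 2)/2" "\<epsilon> \<le> \<nu> + p - 2"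
  obtains M where "M \<ge> 0" and "\<And>x y. x \<ge> 2 * X0 \<Longrightarrow>
     \<bar>(max y X0) powr \<nu> - x powr \<nu> - \<nu> * x powr (\<nu> - 1) * (y - x)
        - \<nu> * (\<nu> - 1) / 2 * x powr (\<nu> - 2) * (y - x)\<^sup>2\<bar>
       \<le> M * x powr (\<nu> - 2 - \<epsilon>) * (1 + \<bar>y - x\<bar> powr p)"
proof -
  obtain C where C0: "C \<ge> 0" and C: "\<And>x y. x > 0 \<Longrightarrow> \<bar>y - x\<bar> \<le> x/2 \<Longrightarrow>
     \<bar>y powr \<nu> - (\<Sum>m<3. (\<Prod>k<m. \<nu> - real k) / fact m * x powr (\<nu> - real m) * (y - x) ^ m)\<bar>
       \<le> C * x powr (\<nu> - real 3) * \<bar>y - x\<bar> ^ 3"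
    using powr_taylor_bound by blast
  define M where "M = C + 8 powr p + 2 powr p * (1 + \<bar>\<nu>\<bar> + \<bar>\<nu> * (\<nu> - 1)\<bar>)"
  have "\<bar>(max y X0) powr \<nu> - x powr \<nu> - \<nu> * x powr (\<nu> - 1) * (y - x)
        - \<nu> * (\<nu> - 1) / 2 * x powr (\<nu> - 2) * (y - x)\<^sup>2\<bar>
       \<le> M * x powr (\<nu> - 2 - \<epsilon>) * (1 + \<bar>y - x\<bar> powr p)" (is "\<bar>?R\<bar> \<le> _")
    if x: "x \<ge> 2 * X0" for x y
  proof -
    define q where "q = \<bar>y - x\<bar>"
    define W where "W = x powr (\<nu> - 2 - \<epsilon>) * (1 + q powr p)"
    have "x \<ge> 1" using x X0 by linarith
    have "W \<ge> 0" by (simp add: W_def)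
    show ?thesis
    proof (cases "q \<le> x/2")
      case True
      then have "max y X0 = y" using x abs_ge_minus_self[of "y - x"] by (simp add: q_def max_def)
      then have "\<bar>?R\<bar> \<le> C * (x powr (\<nu> - 3) * q ^ 3)"
        using C[of x y] True \<open>x \<ge> 1\<close> by (simp add: q_def eval_nat_numeral algebra_simps)
      also have "\<dots> \<le> C * W"
        unfolding W_def using cube_le_moment_weight[of x q p \<epsilon> \<nu>] True \<open>x \<ge> 1\<close> p eps C0
        by (intro mult_left_mono) (auto simp: q_def)
      also have "\<dots> \<le> M * W"
        using \<open>W \<ge> 0\<close> by (intro mult_right_mono) (auto simp: M_def)
      finally show ?thesis by (simp add: W_def q_def)
    next
      case False
      define Z where "Z = q powr p * x powr (\<nu> - 2 - \<epsilon>)"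
      have tail_term: "x powr (\<nu> - k) * q powr k \<le> 2 powr p * Z" if "0 \<le> k" "k \<le> 2" for k
        using powr_tail_term_le[of x q k p \<nu> "\<nu> - 2 - \<epsilon>"] \<open>x \<ge> 1\<close> False that p eps
        by (simp add: Z_def mult.assoc)
      have "(max y X0) powr \<nu> \<le> 8 powr p * Z"
        using max_powr_le_tail[OF X0 x, of y \<nu> p "\<nu> - 2 - \<epsilon>"] False p nu eps
        by (simp add: Z_def q_def mult.assoc)
      moreover have "\<bar>\<nu> * x powr (\<nu> - 1) * (y - x)\<bar> \<le> \<bar>\<nu>\<bar> * (2 powr p * Z)"
        using tail_term[of 1] by (simp add: abs_mult q_def mult.assoc mult_left_mono)
      moreover have "\<bar>\<nu> * (\<nu> - 1) / 2 * x powr (\<nu> - 2) * (y - x)\<^sup>2\<bar> \<le> \<bar>\<nu> * (\<nu> - 1)\<bar> * (2 powr p * Z)"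
      proof -
        have sq: "x powr (\<nu> - 2) * (y - x)\<^sup>2 \<le> 2 powr p * Z"
          using tail_term[of 2] False \<open>x \<ge> 1\<close> by (simp add: q_def powr_power)
        have "\<bar>\<nu> * (\<nu> - 1)\<bar> / 2 * (x powr (\<nu> - 2) * (y - x)\<^sup>2) \<le> \<bar>\<nu> * (\<nu> - 1)\<bar> * (2 powr p * Z)"
          by (rule mult_mono[OF _ sq]) auto
        then show ?thesis by (simp add: abs_mult)
      qed
      moreover have "x powr \<nu> \<le> 2 powr p * Z" using tail_term[of 0] False \<open>x \<ge> 1\<close> by simp
      ultimately have "\<bar>?R\<bar> \<le> 8 powr p * Z + 2 powr p * Z + \<bar>\<nu>\<bar> * (2 powr p * Z)
          + \<bar>\<nu> * (\<nu> - 1)\<bar> * (2 powr p * Z)"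
        using powr_ge_zero[of "max y X0" \<nu>] powr_ge_zero[of x \<nu>] by linarith
      also have "\<dots> = (8 powr p + 2 powr p * (1 + \<bar>\<nu>\<bar> + \<bar>\<nu> * (\<nu> - 1)\<bar>)) * Z"
        by (simp add: distrib_left distrib_right)
      also have "\<dots> \<le> M * W"
        using C0 by (intro mult_mono) (auto simp: M_def Z_def W_def algebra_simps)
      finally show ?thesis by (simp add: W_def q_def)
    qed
  qed
  moreover have "M \<ge> 0" using C0 by (simp add: M_def)
  ultimately show thesis using that by blast
qed

lemma max_powr_taylor0_bound:
  fixes X0 p e \<epsilon> :: real
  assumes X0: "X0 \<ge> 1" and p: "p > 2" and e: "e \<le> p"
    and eps: "\<epsilon> \<le> 1" "\<epsilon> \<le> p" "\<epsilon> \<le> e + p"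
  obtains M where "M \<ge> 0" and "\<And>x y. x \<ge> 2 * X0 \<Longrightarrow>
     \<bar>(max y X0) powr e - x powr e\<bar> \<le> M * x powr (e - \<epsilon>) * (1 + \<bar>y - x\<bar> powr p)"
proof -
  obtain C where C0: "C \<ge> 0" and C: "\<And>x y. x > 0 \<Longrightarrow> \<bar>y - x\<bar> \<le> x/2 \<Longrightarrow>
     \<bar>y powr e - (\<Sum>m<1. (\<Prod>k<m. e - real k) / fact m * x powr (e - real m) * (y - x) ^ m)\<bar>
       \<le> C * x powr (e - real 1) * \<bar>y - x\<bar> ^ 1"
    using powr_taylor_bound by blast
  define M where "M = C + 8 powr p + 2 powr p"
  have "\<bar>(max y X0) powr e - x powr e\<bar> \<le> M * x powr (e - \<epsilon>) * (1 + \<bar>y - x\<bar> powr p)"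
    if x: "x \<ge> 2 * X0" for x y
  proof -
    define q where "q = \<bar>y - x\<bar>"
    define W where "W = x powr (e - \<epsilon>) * (1 + q powr p)"
    have "x \<ge> 1" using x X0 by linarith
    have "W \<ge> 0" by (simp add: W_def)
    show ?thesis
    proof (cases "q \<le> x/2")
      case True
      then have "max y X0 = y" using x abs_ge_minus_self[of "y - x"] by (simp add: q_def max_def)
      then have "\<bar>(max y X0) powr e - x powr e\<bar> \<le> C * (x powr (e - 1) * q)"
        using C[of x y] True \<open>x \<ge> 1\<close> by (simp add: q_def)
      also have "\<dots> \<le> C * W"
        unfolding W_def using le_one_plus_abs_powr(1)[of p q] \<open>x \<ge> 1\<close> p eps C0
        by (intro mult_left_mono mult_mono powr_mono) (auto simp: q_def)
      also have "\<dots> \<le> M * W"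
        using \<open>W \<ge> 0\<close> by (intro mult_right_mono) (auto simp: M_def)
      finally show ?thesis by (simp add: W_def q_def)
    next
      case False
      define Z where "Z = q powr p * x powr (e - \<epsilon>)"
      have "(max y X0) powr e \<le> 8 powr p * Z"
        using max_powr_le_tail[OF X0 x, of y e p "e - \<epsilon>"] False p e eps
        by (simp add: Z_def q_def mult.assoc)
      moreover have "x powr e \<le> 2 powr p * Z"
        using powr_tail_term_le[of x q 0 p e "e - \<epsilon>"] \<open>x \<ge> 1\<close> False p eps
        by (simp add: Z_def mult.assoc)
      ultimately have "\<bar>(max y X0) powr e - x powr e\<bar> \<le> (8 powr p + 2 powr p) * Z"
        unfolding distrib_right using powr_ge_zero[of "max y X0" e] powr_ge_zero[of x e]
        by linarith
      also have "\<dots> \<le> M * W"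
        using C0 by (intro mult_mono) (auto simp: M_def Z_def W_def algebra_simps)
      finally show ?thesis by (simp add: W_def q_def)
    qed
  qed
  moreover have "M \<ge> 0" using C0 by (simp add: M_def)
  ultimately show thesis using that by blast
qed

text \<open>\<open>\<bar>C\<bar>\<close> because \<open>ennreal C = 0\<close> for negative \<open>C\<close>.\<close>

lemma pmf_expectation_bound_by_moment:
  fixes Q :: "'a pmf" and D g :: "'a \<Rightarrow> real"
  assumes mom: "(\<integral>\<^sup>+ w. ennreal (D w) \<partial>measure_pmf Q) \<le> ennreal C"
    and D: "\<And>w. D w \<ge> 0" and A: "A \<ge> 0"
    and g: "\<And>w. w \<in> set_pmf Q \<Longrightarrow> \<bar>g w\<bar> \<le> A * (1 + D w)"
  shows "integrable Q g" and "\<bar>measure_pmf.expectation Q g\<bar> \<le> A * (1 + \<bar>C\<bar>)"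
proof -
  have intD: "integrable Q D"
    using mom D by (intro integrableI_nonneg) (auto simp: le_less_trans[OF mom])
  have ED: "measure_pmf.expectation Q D \<le> \<bar>C\<bar>"
  proof -
    have "measure_pmf.expectation Q D = enn2real (\<integral>\<^sup>+ w. ennreal (D w) \<partial>measure_pmf Q)"
      using D by (intro integral_eq_nn_integral) auto
    also have "\<dots> \<le> enn2real (ennreal C)" using mom by (intro enn2real_mono) auto
    also have "\<dots> \<le> \<bar>C\<bar>" by (cases "C \<ge> 0") (auto simp: ennreal_neg)
    finally show ?thesis .
  qed
  have intA: "integrable Q (\<lambda>w. A * (1 + D w))" using intD by simp
  show int: "integrable Q g"
    by (rule Bochner_Integration.integrable_bound[OF intA]) (auto intro!: AE_pmfI intro: order.trans[OF g abs_ge_self])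
  have "\<bar>measure_pmf.expectation Q g\<bar> \<le> measure_pmf.expectation Q (\<lambda>w. \<bar>g w\<bar>)"
    using integral_norm_bound[of Q g] by simp
  also have "\<dots> \<le> measure_pmf.expectation Q (\<lambda>w. A * (1 + D w))"
    using int intA by (intro integral_mono_AE) (auto intro!: AE_pmfI g)
  also have "\<dots> = A * (1 + measure_pmf.expectation Q D)" using intD by simp
  also have "\<dots> \<le> A * (1 + \<bar>C\<bar>)" using ED A by (intro mult_left_mono) auto
  finally show "\<bar>measure_pmf.expectation Q g\<bar> \<le> A * (1 + \<bar>C\<bar>)" .
qed

lemma pmf_expectation_snd_eq_sum:
  fixes Q :: "('a \<times> 'i) pmf" and h :: "'i \<Rightarrow> real"
  assumes "finite S" and "\<And>w. w \<in> set_pmf Q \<Longrightarrow> snd w \<in> S"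
  shows "measure_pmf.expectation Q (\<lambda>w. h (snd w))
       = (\<Sum>j\<in>S. h j * measure_pmf.prob Q {w. snd w = j})"
proof -
  have "measure_pmf.expectation Q (\<lambda>w. h (snd w)) = measure_pmf.expectation (map_pmf snd Q) h"
    by simp
  also have "\<dots> = (\<Sum>j\<in>S. h j * pmf (map_pmf snd Q) j)"
    using assms by (intro integral_measure_pmf_real) auto
  finally show ?thesis by (simp add: pmf_map vimage_def mult.commute)
qed

lemma pmf_expectation_taylor2_error:
  fixes Q :: "(real \<times> 'i) pmf" and H K :: "real \<Rightarrow> real" and u :: "'i \<Rightarrow> real"
  assumes mom: "(\<integral>\<^sup>+ w. ennreal (\<bar>fst w - x\<bar> powr p) \<partial>measure_pmf Q) \<le> ennreal C"
    and p: "p \<ge> 2" and S: "finite S" and supp: "\<And>w. w \<in> set_pmf Q \<Longrightarrow> snd w \<in> S"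
    and u: "\<And>j. j \<in> S \<Longrightarrow> \<bar>u j\<bar> \<le> B" and B: "B \<ge> 0" and e: "eH \<ge> 0" "eK \<ge> 0"
    and H: "\<And>y. \<bar>H y - h0 - a1 * (y - x) - a2 * (y - x)\<^sup>2\<bar> \<le> eH * (1 + \<bar>y - x\<bar> powr p)"
    and K: "\<And>y. \<bar>K y - k0\<bar> \<le> eK * (1 + \<bar>y - x\<bar> powr p)"
  shows "\<bar>measure_pmf.expectation Q (\<lambda>w. (H (fst w) + u (snd w) * K (fst w)) - (h0 + u i * k0))
          - (a1 * measure_pmf.expectation Q (\<lambda>w. fst w - x)
             + a2 * measure_pmf.expectation Q (\<lambda>w. (fst w - x)\<^sup>2)
             + k0 * (\<Sum>j\<in>S. (u j - u i) * measure_pmf.prob Q {w. snd w = j}))\<bar>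
         \<le> (eH + B * eK) * (1 + \<bar>C\<bar>)"
proof -
  define D where "D w = \<bar>fst w - x\<bar> powr p" for w :: "real \<times> 'i"
  have mom': "(\<integral>\<^sup>+ w. ennreal (D w) \<partial>measure_pmf Q) \<le> ennreal C" using mom by (simp add: D_def)
  have D0: "D w \<ge> 0" for w by (simp add: D_def)
  note bound = pmf_expectation_bound_by_moment[OF mom' D0]
  define R where "R w = (H (fst w) - h0 - a1 * (fst w - x) - a2 * (fst w - x)\<^sup>2)
    + u (snd w) * (K (fst w) - k0)" for w
  have Rb: "\<bar>R w\<bar> \<le> (eH + B * eK) * (1 + D w)" if "w \<in> set_pmf Q" for w
  proof -
    have "\<bar>u (snd w) * (K (fst w) - k0)\<bar> \<le> B * (eK * (1 + D w))"
      using u[OF supp[OF that]] K[of "fst w"] B by (simp add: abs_mult D_def mult_mono)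
    then show ?thesis
      using H[of "fst w"] abs_triangle_ineq[of "H (fst w) - h0 - a1 * (fst w - x) - a2 * (fst w - x)\<^sup>2"
          "u (snd w) * (K (fst w) - k0)"]
      by (simp add: R_def D_def algebra_simps)
  qed
  have "eH + B * eK \<ge> 0" using B e by simp
  note boundR = bound[OF this Rb]
  have int1: "integrable Q (\<lambda>w. fst w - x)" and int2: "integrable Q (\<lambda>w. (fst w - x)\<^sup>2)"
    using bound[of 1] le_one_plus_abs_powr[OF p] by (simp_all add: D_def)
  have u_diff: "\<bar>u (snd w) - u i\<bar> \<le> (B + \<bar>u i\<bar>) * (1 + D w)" if "w \<in> set_pmf Q" for w
  proof -
    have "\<bar>u (snd w) - u i\<bar> \<le> (B + \<bar>u i\<bar>) * 1" using u[OF supp[OF that]] by simp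
    also have "\<dots> \<le> (B + \<bar>u i\<bar>) * (1 + D w)" using B by (intro mult_left_mono) (auto simp: D_def)
    finally show ?thesis .
  qed
  have int3: "integrable Q (\<lambda>w. u (snd w) - u i)"
    using bound[OF _ u_diff] B by simp
  have split: "(\<lambda>w. (H (fst w) + u (snd w) * K (fst w)) - (h0 + u i * k0))
      = (\<lambda>w. a1 * (fst w - x) + a2 * (fst w - x)\<^sup>2 + k0 * (u (snd w) - u i) + R w)"
    by (auto simp: R_def algebra_simps)
  show ?thesis
    unfolding split using int1 int2 int3 boundR
    by (simp add: pmf_expectation_snd_eq_sum[OF S supp, where h = "\<lambda>j. u j - u i"])
qed

lemma eventually_eq_powr_mult_of_error_bound:
  fixes F :: "real filter" and E L :: "real \<Rightarrow> real"
  assumes F: "F \<le> at_top" and a: "a \<noteq> 0" and eps: "\<epsilon> > 0"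
    and err: "\<forall>\<^sub>F x in F. \<bar>E x - a * x powr k * L x\<bar> \<le> K * x powr (k - \<epsilon>)"
    and L: "(L \<longlongrightarrow> A) F"
  shows "\<exists>g. (g \<longlongrightarrow> 0) F \<and> (\<forall>\<^sub>F x in F. E x = a * x powr k * (A + g x))"
proof -
  define g where "g x = E x / (a * x powr k) - A" for x
  have pos: "\<forall>\<^sub>F x in F. x > 0" using F eventually_gt_at_top[of 0] by (rule filter_leD)
  have "\<forall>\<^sub>F x in F. norm (g x - (L x - A)) \<le> K / \<bar>a\<bar> * x powr (- \<epsilon>)"
    using err pos
  proof eventually_elim
    case (elim x)
    have "g x - (L x - A) = (E x - a * x powr k * L x) / (\<bar>a\<bar> * x powr k) * sgn a"
      using a elim(2) by (simp add: g_def field_simps sgn_if)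
    also have "\<bar>\<dots>\<bar> \<le> K * x powr (k - \<epsilon>) / (\<bar>a\<bar> * x powr k)"
      using a elim by (simp add: abs_mult divide_right_mono)
    also have "\<dots> = K / \<bar>a\<bar> * x powr (- \<epsilon>)"
      using elim(2) by (simp add: powr_diff powr_minus divide_inverse)
    finally show ?case by simp
  qed
  moreover have "((\<lambda>x. K / \<bar>a\<bar> * x powr (- \<epsilon>)) \<longlongrightarrow> 0) F"
    using eps by (intro tendsto_mono[OF F] tendsto_mult_right_zero tendsto_neg_powr filterlim_ident) simp
  ultimately have "((\<lambda>x. g x - (L x - A)) \<longlongrightarrow> 0) F" by (rule Lim_null_comparison)
  then have "((\<lambda>x. (g x - (L x - A)) + (L x - A)) \<longlongrightarrow> 0 + (A - A)) F"
    using L by (intro tendsto_intros)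
  moreover have "\<forall>\<^sub>F x in F. E x = a * x powr k * (A + g x)"
    using pos by eventually_elim (use a in \<open>simp add: g_def\<close>)
  ultimately show ?thesis by auto
qed

lemma tendsto_mult_of_smallo_inverse:
  fixes F :: "real filter" and m :: "real \<Rightarrow> real"
  assumes F: "F \<le> at_top" and m: "(\<lambda>x. m x - c / x) \<in> o[F](\<lambda>x. 1 / x)"
  shows "((\<lambda>x. x * m x) \<longlongrightarrow> c) F"
proof -
  have pos: "\<forall>\<^sub>F x in F. x > 0" using F eventually_gt_at_top[of 0] by (rule filter_leD)
  have "((\<lambda>x. (m x - c / x) / (1 / x)) \<longlongrightarrow> 0) F" using m by (rule smalloD_tendsto)
  moreover have "\<forall>\<^sub>F x in F. (m x - c / x) / (1 / x) = x * m x - c"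
    using pos by eventually_elim (simp add: field_simps)
  ultimately have "((\<lambda>x. x * m x - c) \<longlongrightarrow> 0) F" by (rule Lim_transform_eventually)
  then show ?thesis by (simp add: LIM_zero_iff)
qed

lemma along_line_le_at_top: "along_line \<Sigma> k \<le> at_top"
  by (simp add: along_line_def)

lemma eventually_in_line: "\<forall>\<^sub>F x in along_line \<Sigma> k. (x, k) \<in> \<Sigma>"
  by (simp add: along_line_def eventually_inf_principal line_def)

lemma x0_const_ge_one:
  assumes "finite S" and "S \<noteq> {}"
  shows "x0_const S b \<nu> \<ge> 1"
proof -
  obtain j where "j \<in> S" using assms by blast
  then have "0 \<le> Max ((\<lambda>i. \<bar>b i\<bar>) ` S)"
    using assms by (meson Max_ge abs_ge_zero finite_imageI imageI order.trans)
  then show ?thesis by (simp add: x0_const_def)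
qed

lemma f_nu_eq_max:
  "f_nu S b \<nu> w = (max (fst w) (x0_const S b \<nu>)) powr \<nu>
     + \<nu>/2 * b (snd w) * (max (fst w) (x0_const S b \<nu>)) powr (\<nu> - 2)"
  unfolding f_nu_def Let_def by (auto simp: max_def)

text \<open>The bracket of the theorem before the limit, \<open>2 x \<mu>\<^sub>i(x) + (\<nu> - 1) \<sigma>\<^sub>i\<^sup>2(x) + \<Sum>\<^sub>j (b\<^sub>j - b\<^sub>i) q\<^sub>i\<^sub>j(x)\<close>,
  for the transition law \<open>Q\<close> from \<open>(x, i)\<close>.\<close>

definition drift_coeff :: "'i set \<Rightarrow> ('i \<Rightarrow> real) \<Rightarrow> real \<Rightarrow> (real \<times> 'i) pmf \<Rightarrow> real \<Rightarrow> 'i \<Rightarrow> real"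
  where "drift_coeff S b \<nu> Q x i = 2 * (x * measure_pmf.expectation Q (\<lambda>w. fst w - x))
      + (\<nu> - 1) * measure_pmf.expectation Q (\<lambda>w. (fst w - x)\<^sup>2)
      + (\<Sum>j\<in>S. (b j - b i) * measure_pmf.prob Q {w. snd w = j})"

lemma f_nu_expectation_error:
  fixes Q :: "(real \<times> 'i) pmf" and S :: "'i set" and b :: "'i \<Rightarrow> real" and \<nu> :: real
  defines "X0 \<equiv> x0_const S b \<nu>"
  assumes S: "finite S" "S \<noteq> {}" and p: "p \<ge> 2" and x: "x \<ge> X0"
    and mom: "(\<integral>\<^sup>+ w. ennreal (\<bar>fst w - x\<bar> powr p) \<partial>measure_pmf Q) \<le> ennreal C"
    and supp: "\<And>w. w \<in> set_pmf Q \<Longrightarrow> snd w \<in> S"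
    and e: "eH \<ge> 0" "eK \<ge> 0"
    and H: "\<And>y. \<bar>(max y X0) powr \<nu> - x powr \<nu> - \<nu> * x powr (\<nu> - 1) * (y - x)
        - \<nu> * (\<nu> - 1) / 2 * x powr (\<nu> - 2) * (y - x)\<^sup>2\<bar> \<le> eH * (1 + \<bar>y - x\<bar> powr p)"
    and K: "\<And>y. \<bar>(max y X0) powr (\<nu> - 2) - x powr (\<nu> - 2)\<bar> \<le> eK * (1 + \<bar>y - x\<bar> powr p)"
  shows "\<bar>measure_pmf.expectation Q (\<lambda>w. f_nu S b \<nu> w - f_nu S b \<nu> (x, i))
           - \<nu>/2 * x powr (\<nu> - 2) * drift_coeff S b \<nu> Q x i\<bar>
         \<le> (eH + \<bar>\<nu>\<bar>/2 * (\<Sum>j\<in>S. \<bar>b j\<bar>) * eK) * (1 + \<bar>C\<bar>)"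
proof -
  have "x \<ge> 1" using x x0_const_ge_one[OF S, of b \<nu>] by (simp add: X0_def)
  have f_diff: "f_nu S b \<nu> w - f_nu S b \<nu> (x, i)
      = ((max (fst w) X0) powr \<nu> + \<nu>/2 * b (snd w) * (max (fst w) X0) powr (\<nu> - 2))
        - (x powr \<nu> + \<nu>/2 * b i * x powr (\<nu> - 2))" for w
    using x by (simp add: f_nu_eq_max X0_def max_absorb1)
  have taylor: "\<nu> * x powr (\<nu> - 1) * m1 + \<nu> * (\<nu> - 1) / 2 * x powr (\<nu> - 2) * m2
      + x powr (\<nu> - 2) * (\<Sum>j\<in>S. (\<nu>/2 * b j - \<nu>/2 * b i) * pj j)
      = \<nu>/2 * x powr (\<nu> - 2) * (2 * (x * m1) + (\<nu> - 1) * m2 + (\<Sum>j\<in>S. (b j - b i) * pj j))"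
    for m1 m2 and pj :: "'i \<Rightarrow> real"
  proof -
    have "x powr (\<nu> - 1) = x powr (\<nu> - 2) * x"
      using \<open>x \<ge> 1\<close> by (simp add: powr_diff field_simps power2_eq_square)
    moreover have "(\<Sum>j\<in>S. (\<nu>/2 * b j - \<nu>/2 * b i) * pj j) = \<nu>/2 * (\<Sum>j\<in>S. (b j - b i) * pj j)"
      unfolding sum_distrib_left by (intro sum.cong) (auto simp: algebra_simps)
    ultimately show ?thesis by (simp add: field_simps)
  qed
  have b_bound: "\<bar>\<nu>/2 * b j\<bar> \<le> \<bar>\<nu>\<bar>/2 * (\<Sum>j\<in>S. \<bar>b j\<bar>)" if "j \<in> S" for j
    using S that by (auto simp: abs_mult intro!: mult_left_mono member_le_sum)
  have "\<bar>measure_pmf.expectation Q (\<lambda>w. f_nu S b \<nu> w - f_nu S b \<nu> (x, i))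
      - (\<nu> * x powr (\<nu> - 1) * measure_pmf.expectation Q (\<lambda>w. fst w - x)
         + \<nu> * (\<nu> - 1) / 2 * x powr (\<nu> - 2) * measure_pmf.expectation Q (\<lambda>w. (fst w - x)\<^sup>2)
         + x powr (\<nu> - 2) * (\<Sum>j\<in>S. (\<nu>/2 * b j - \<nu>/2 * b i) * measure_pmf.prob Q {w. snd w = j}))\<bar>
      \<le> (eH + \<bar>\<nu>\<bar>/2 * (\<Sum>j\<in>S. \<bar>b j\<bar>) * eK) * (1 + \<bar>C\<bar>)"
    unfolding f_diff
    by (rule pmf_expectation_taylor2_error[OF mom p S(1) supp b_bound, where i = i
          and H = "\<lambda>y. (max y X0) powr \<nu>" and K = "\<lambda>y. (max y X0) powr (\<nu> - 2)"])
      (use e H K in \<open>auto intro: sum_nonneg\<close>)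
  then show ?thesis unfolding drift_coeff_def taylor .
qed

lemma f_nu_drift_error:
  fixes S :: "'i set" and \<Sigma> :: "(real \<times> 'i) set" and P :: "real \<times> 'i \<Rightarrow> (real \<times> 'i) pmf"
    and b :: "'i \<Rightarrow> real" and p C \<nu> :: real
  assumes S: "finite S" "S \<noteq> {}" and p: "p > 2" and nu: "2 - p < \<nu>" "\<nu> \<le> p"
    and Sigma_sub: "\<Sigma> \<subseteq> {0..} \<times> S" and P_closed: "\<forall>z\<in>\<Sigma>. set_pmf (P z) \<subseteq> \<Sigma>"
    and moment: "\<forall>z\<in>\<Sigma>. (\<integral>\<^sup>+ w. ennreal (\<bar>fst w - fst z\<bar> powr p) \<partial>measure_pmf (P z)) \<le> ennreal C"
  obtains \<epsilon> K where "\<epsilon> > 0" and "\<And>i. \<forall>\<^sub>F x in along_line \<Sigma> i.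
      \<bar>measure_pmf.expectation (P (x, i)) (\<lambda>w. f_nu S b \<nu> w - f_nu S b \<nu> (x, i))
        - \<nu>/2 * x powr (\<nu> - 2) * drift_coeff S b \<nu> (P (x, i)) x i\<bar> \<le> K * x powr (\<nu> - 2 - \<epsilon>)"
proof -
  define X0 where "X0 = x0_const S b \<nu>"
  have X0: "X0 \<ge> 1" unfolding X0_def using x0_const_ge_one[OF S] .
  \<comment> \<open>Any positive \<open>\<epsilon>\<close> below these three bounds works; positivity is where \<open>2 - p < \<nu>\<close> enters.\<close>
  define \<epsilon> where "\<epsilon> = min (1/2) (min ((p - 2)/2) (\<nu> + p - 2))"
  have eps: "0 < \<epsilon>" "\<epsilon> \<le> 1/2" "\<epsilon> \<le> (p - 2)/2" "\<epsilon> \<le> \<nu> + p - 2"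
    using p nu by (auto simp: \<epsilon>_def min_def)
  obtain MH where MH: "MH \<ge> 0" "\<And>x y. x \<ge> 2 * X0 \<Longrightarrow>
     \<bar>(max y X0) powr \<nu> - x powr \<nu> - \<nu> * x powr (\<nu> - 1) * (y - x)
        - \<nu> * (\<nu> - 1) / 2 * x powr (\<nu> - 2) * (y - x)\<^sup>2\<bar>
       \<le> MH * x powr (\<nu> - 2 - \<epsilon>) * (1 + \<bar>y - x\<bar> powr p)"
    using max_powr_taylor2_bound[OF X0 p nu(2) eps(2-4)] by blast
  obtain MK where MK: "MK \<ge> 0" "\<And>x y. x \<ge> 2 * X0 \<Longrightarrow>
     \<bar>(max y X0) powr (\<nu> - 2) - x powr (\<nu> - 2)\<bar> \<le> MK * x powr (\<nu> - 2 - \<epsilon>) * (1 + \<bar>y - x\<bar> powr p)"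
    using max_powr_taylor0_bound[OF X0 p, of "\<nu> - 2" \<epsilon>] nu eps by auto
  define B where "B = \<bar>\<nu>\<bar>/2 * (\<Sum>j\<in>S. \<bar>b j\<bar>)"
  show thesis
  proof (rule that[OF eps(1)])
    fix i
    show "\<forall>\<^sub>F x in along_line \<Sigma> i.
      \<bar>measure_pmf.expectation (P (x, i)) (\<lambda>w. f_nu S b \<nu> w - f_nu S b \<nu> (x, i))
        - \<nu>/2 * x powr (\<nu> - 2) * drift_coeff S b \<nu> (P (x, i)) x i\<bar>
      \<le> (MH + B * MK) * (1 + \<bar>C\<bar>) * x powr (\<nu> - 2 - \<epsilon>)"
      using eventually_in_line[where \<Sigma> = \<Sigma> and k = i]
        filter_leD[OF along_line_le_at_top[where \<Sigma> = \<Sigma> and k = i] eventually_ge_at_top[of "2 * X0"]]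
    proof eventually_elim
      case (elim x)
      define V where "V = x powr (\<nu> - 2 - \<epsilon>)"
      have mom: "(\<integral>\<^sup>+ w. ennreal (\<bar>fst w - x\<bar> powr p) \<partial>measure_pmf (P (x, i))) \<le> ennreal C"
        using moment elim by force
      have supp: "snd w \<in> S" if "w \<in> set_pmf (P (x, i))" for w
        using P_closed Sigma_sub elim that by force
      have "\<bar>measure_pmf.expectation (P (x, i)) (\<lambda>w. f_nu S b \<nu> w - f_nu S b \<nu> (x, i))
          - \<nu>/2 * x powr (\<nu> - 2) * drift_coeff S b \<nu> (P (x, i)) x i\<bar> \<le> (MH * V + B * (MK * V)) * (1 + \<bar>C\<bar>)"
        unfolding B_def
        by (rule f_nu_expectation_error[OF S _ _ mom supp])
          (use elim X0 p MH(1) MK(1) MH(2)[of x] MK(2)[of x] in \<open>auto simp: X0_def V_def mult.assoc\<close>)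
      also have "\<dots> = (MH + B * MK) * (1 + \<bar>C\<bar>) * x powr (\<nu> - 2 - \<epsilon>)"
        by (simp add: V_def algebra_simps)
      finally show ?case .
    qed
  qed
qed

theorem lemma3p2:
  fixes S :: "'i set" and \<Sigma> :: "(real \<times> 'i) set"
    and P :: "real \<times> 'i \<Rightarrow> (real \<times> 'i) pmf"
    and p Cp :: real and q :: "'i \<Rightarrow> 'i \<Rightarrow> real"
    and c s2 b :: "'i \<Rightarrow> real" and \<nu> :: real
  assumes S_fin: "finite S" and S_ne: "S \<noteq> {}"
    and Sigma_sub: "\<Sigma> \<subseteq> {0..} \<times> S"
    and loc_fin: "\<forall>r\<ge>0. finite (\<Sigma> \<inter> ({0..r} \<times> S))"
    and P_closed: "\<forall>z\<in>\<Sigma>. set_pmf (P z) \<subseteq> \<Sigma>"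
    and irred: "\<forall>z\<in>\<Sigma>. \<forall>w\<in>\<Sigma>. (z, w) \<in> (step_rel \<Sigma> P)\<^sup>*"
    and unbdd: "\<forall>k\<in>S. \<not> bdd_above (line \<Sigma> k)"
    and p_gt: "p > 2"
    and moment: "\<forall>z\<in>\<Sigma>. (\<integral>\<^sup>+ w. ennreal (\<bar>fst w - fst z\<bar> powr p) \<partial>measure_pmf (P z)) \<le> ennreal Cp"
    and q_lim: "\<forall>i\<in>S. \<forall>j\<in>S.
        ((\<lambda>x. measure_pmf.prob (P (x, i)) {w. snd w = j}) \<longlongrightarrow> q i j) (along_line \<Sigma> i)"
    and q_nonneg: "\<forall>i\<in>S. \<forall>j\<in>S. q i j \<ge> 0"
    and q_stoch: "\<forall>i\<in>S. (\<Sum>j\<in>S. q i j) = 1"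
    and q_irred: "\<forall>i\<in>S. \<forall>j\<in>S. (i, j) \<in> {(a, b'). a \<in> S \<and> b' \<in> S \<and> q a b' > 0}\<^sup>*"
    and mu_asym: "\<forall>i\<in>S. (\<lambda>x. measure_pmf.expectation (P (x, i)) (\<lambda>w. fst w - x) - c i / x)
                     \<in> o[along_line \<Sigma> i](\<lambda>x. 1 / x)"
    and sigma_asym: "\<forall>i\<in>S. ((\<lambda>x. measure_pmf.expectation (P (x, i)) (\<lambda>w. (fst w - x)\<^sup>2))
                     \<longlongrightarrow> s2 i) (along_line \<Sigma> i)"
    and s2_nonneg: "\<forall>i\<in>S. s2 i \<ge> 0"
    and s2_nz: "\<exists>i\<in>S. s2 i \<noteq> 0"
    and nu_range: "2 - p < \<nu>" "\<nu> \<le> p"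
  shows "\<forall>i\<in>S. \<exists>g. (g \<longlongrightarrow> 0) (along_line \<Sigma> i) \<and>
           (\<forall>\<^sub>F x in along_line \<Sigma> i.
              measure_pmf.expectation (P (x, i)) (\<lambda>w. f_nu S b \<nu> w - f_nu S b \<nu> (x, i))
              = \<nu> / 2 * x powr (\<nu> - 2) *
                (2 * c i + (\<nu> - 1) * s2 i + (\<Sum>j\<in>S. (b j - b i) * q i j) + g x))"
proof (cases "\<nu> = 0")
  case True
  then have "f_nu S b \<nu> w = 1" for w
    using x0_const_ge_one[OF S_fin S_ne, of b \<nu>] by (simp add: f_nu_eq_max)
  with True show ?thesis by (auto intro!: exI[of _ "\<lambda>_. 0"])
next
  case False
  obtain \<epsilon> K where "\<epsilon> > 0" and err: "\<And>i. \<forall>\<^sub>F x in along_line \<Sigma> i.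
      \<bar>measure_pmf.expectation (P (x, i)) (\<lambda>w. f_nu S b \<nu> w - f_nu S b \<nu> (x, i))
        - \<nu>/2 * x powr (\<nu> - 2) * drift_coeff S b \<nu> (P (x, i)) x i\<bar> \<le> K * x powr (\<nu> - 2 - \<epsilon>)"
    using f_nu_drift_error[OF S_fin S_ne p_gt nu_range Sigma_sub P_closed moment] by blast
  have lim: "((\<lambda>x. drift_coeff S b \<nu> (P (x, i)) x i)
      \<longlongrightarrow> 2 * c i + (\<nu> - 1) * s2 i + (\<Sum>j\<in>S. (b j - b i) * q i j)) (along_line \<Sigma> i)"
    if "i \<in> S" for i
    unfolding drift_coeff_def using that mu_asym sigma_asym q_lim
    by (intro tendsto_intros tendsto_mult_of_smallo_inverse along_line_le_at_top) auto
  show ?thesis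
    using False
    by (intro ballI eventually_eq_powr_mult_of_error_bound[OF along_line_le_at_top _ \<open>\<epsilon> > 0\<close> err lim])
      auto
qed

end
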